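(* In the setting where $g=\phi_\eta(\nu)\sigma_h\in\operatorname{Aut}(V_\Lambda)$ has finite order $n>1$ and type $0$, $V_\Lambda^g$ satisfies positivity, $\operatorname{rk}((V_\Lambda^{\mathrm{orb}(g)})_1)=\operatorname{rk}((V_\Lambda^g)_1)>0$, $\phi_\eta(\nu)$ is a standard lift and $h\in\pi_\nu(\Lambda\otimes\mathbb{Q})$: suppose $\Phi(g)$ contains a connected component of affine type with nodes $\alpha_0,\dots,\alpha_l\in\Pi(g)$, and let $a_0,\dots,a_l$ be its Kac labels (the coprime positive integers with $\sum_i a_i\alpha_i=0$). Put $\beta_i=\alpha_i+h\in\tilde\Pi(g)$. Then $$h=\Big(\sum_{i=0}^l a_i\beta_i\Big)\Big/\Big(\sum_{i=0}^l a_i\Big).$$ In particular $h$ is determined by the shifted weights $\tilde\Pi(g)$.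
   Context: $\Lambda$ is the Leech lattice, $V_\Lambda$ its lattice VOA; automorphisms are $\phi_\eta(\nu)\sigma_h$ with $\nu\in\mathrm{O}(\Lambda)$, $\phi_\eta(\nu)$ a lift (standard if $\eta|_{\Lambda^\nu}=1$), $\sigma_h=e^{2\pi ih_0}$; $\pi_\nu$ is the projection onto the $\nu$-fixed subspace of $\Lambda\otimes\mathbb{C}$. $V_\Lambda(g)$ is the unique irreducible $g$-twisted module; type $0$ means its conformal weight lies in $\frac1n\mathbb{Z}$; positivity means every irreducible $V_\Lambda^g$-module other than $V_\Lambda^g$ has positive conformal weight; $V_\Lambda^{\mathrm{orb}(g)}=\bigoplus_{i\in\mathbb{Z}_n}W^{(i,0)}$ is the cyclic orbifold construction. Then $\mathfrak h=(V_\Lambda^g)_1\cong\pi_\nu(\Lambda\otimes\mathbb{C})$ is a Cartan subalgebra of $(V_\Lambda^{\mathrm{orb}(g)})_1$; $\Pi(g)\subseteq\mathfrak h^*\cong\mathfrak h$ is the set of weights of $\mathfrak h$ on $V_\Lambda(g)_1$, $\Phi(g)$ the Dynkin diagram on nodes $\Pi(g)$ with Cartan matrix $2\langle\alpha_i,\alpha_j\rangle/\langle\alpha_i,\alpha_i\rangle$, and $\tilde\Pi(g)=\Pi(g)+h\subseteq\pi_\nu(\Lambda)$ the shifted weights. *)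

theory Defs
  imports "HOL-Analysis.Analysis"
begin

text \<open>The weights Pi(g) are
 modelled as a finite set of vectors in a real inner product space
 (h^* identified with h via the form), h as a vector of that space.\<close>

definition cartan_entry :: "'a::real_inner \<Rightarrow> 'a \<Rightarrow> real" where
  "cartan_entry x y = 2 * (x \<bullet> y) / (x \<bullet> x)"

definition dynkin_adj :: "'a::real_inner set \<Rightarrow> 'a \<Rightarrow> 'a \<Rightarrow> bool" where
  "dynkin_adj P x y \<longleftrightarrow> x \<in> P \<and> y \<in> P \<and> x \<noteq> y \<and> cartan_entry x y \<noteq> 0"

definition dynkin_component :: "'a::real_inner set \<Rightarrow> 'a set \<Rightarrow> bool" where
  "dynkin_component P C \<longleftrightarrow> C \<noteq> {} \<and> C \<subseteq> P \<and>
     (\<forall>x\<in>C. \<forall>y. dynkin_adj P x y \<longrightarrow> y \<in> C) \<and>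
     (\<forall>x\<in>C. \<forall>y\<in>C. (dynkin_adj P)\<^sup>*\<^sup>* x y)"

text \<open>Affine type (Kac, Thm 4.3, for an indecomposable generalized Cartan matrix):
 there is a vector with positive entries in the kernel of the Cartan matrix.\<close>
definition affine_type :: "nat \<Rightarrow> (nat \<Rightarrow> 'a::real_inner) \<Rightarrow> bool" where
  "affine_type l \<alpha> \<longleftrightarrow> (\<exists>\<delta>::nat \<Rightarrow> real. (\<forall>i\<le>l. \<delta> i > 0) \<and>
     (\<forall>i\<le>l. (\<Sum>j\<le>l. cartan_entry (\<alpha> i) (\<alpha> j) * \<delta> j) = 0))"

definition kac_labels :: "nat \<Rightarrow> (nat \<Rightarrow> 'a::real_inner) \<Rightarrow> (nat \<Rightarrow> int) \<Rightarrow> bool" where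
  "kac_labels l \<alpha> a \<longleftrightarrow> (\<forall>i\<le>l. a i > 0) \<and> Gcd (a ` {..l}) = 1 \<and>
     (\<Sum>i\<le>l. of_int (a i) *\<^sub>R \<alpha> i) = 0"

end

theory Submission
  imports Defs
begin

lemma weighted_sum_shift:
  fixes w :: "'i \<Rightarrow> real" and v :: "'i \<Rightarrow> 'a::real_vector"
  assumes "(\<Sum>i\<in>I. w i *\<^sub>R v i) = 0"
  shows "(\<Sum>i\<in>I. w i *\<^sub>R (v i + h)) = sum w I *\<^sub>R h"
proof -
  have "(\<Sum>i\<in>I. w i *\<^sub>R (v i + h)) = (\<Sum>i\<in>I. w i *\<^sub>R v i) + (\<Sum>i\<in>I. w i *\<^sub>R h)"
    by (simp add: scaleR_add_right sum.distrib)
  also have "\<dots> = sum w I *\<^sub>R h"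
    using assms by (simp add: scaleR_sum_left)
  finally show ?thesis .
qed

lemma weighted_mean_shift:
  fixes w :: "'i \<Rightarrow> real" and v :: "'i \<Rightarrow> 'a::real_vector"
  assumes "(\<Sum>i\<in>I. w i *\<^sub>R v i) = 0" and "sum w I \<noteq> 0"
  shows "h = (1 / sum w I) *\<^sub>R (\<Sum>i\<in>I. w i *\<^sub>R (v i + h))"
  using assms by (simp add: weighted_sum_shift)

lemma kac_labels_sum_pos:
  assumes "kac_labels l \<alpha> a"
  shows "(\<Sum>i\<le>l. a i) > 0"
proof -
  have pos: "\<forall>i\<le>l. a i > 0"
    using assms unfolding kac_labels_def by blast
  have "a 0 \<le> (\<Sum>i\<le>l. a i)"
    by (rule member_le_sum) (use pos in auto)
  with pos show ?thesis by fastforce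
qed

theorem proposition4p4:
  fixes P :: "'a::euclidean_space set" and h :: 'a
    and l :: nat and \<alpha> :: "nat \<Rightarrow> 'a" and a :: "nat \<Rightarrow> int"
  assumes "finite P"
    and "inj_on \<alpha> {..l}"
    and "dynkin_component P (\<alpha> ` {..l})"
    and "affine_type l \<alpha>"
    and "kac_labels l \<alpha> a"
  shows "h = (1 / real_of_int (\<Sum>i\<le>l. a i)) *\<^sub>R (\<Sum>i\<le>l. of_int (a i) *\<^sub>R (\<alpha> i + h))"
proof -
  have "(\<Sum>i\<le>l. real_of_int (a i) *\<^sub>R \<alpha> i) = 0"
    using assms(5) unfolding kac_labels_def by blast
  moreover have "(\<Sum>i\<le>l. real_of_int (a i)) \<noteq> 0"
    using kac_labels_sum_pos [OF assms(5)] by (simp flip: of_int_sum)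
  ultimately show ?thesis
    using weighted_mean_shift [of "\<lambda>i. real_of_int (a i)" \<alpha> "{..l}" h] by simp
qed

end
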